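(* Let $\mathcal{G}$ be a connected $k$-uniform hypergraph with $n$ vertices, and let $\Delta$ be the maximum degree of $\mathcal{G}$. Then $\mathcal{G}$ is a $2$-design if and only if $\alpha_1(\mathcal{G})=\cdots=\alpha_n(\mathcal{G})=\frac{\Delta(k-1)}{n-1}$.
   Context: A $k$-uniform hypergraph $\mathcal{G}$ has vertex set $V(\mathcal{G})=[n]$ and edge set $E(\mathcal{G})$ of $k$-element subsets of $V(\mathcal{G})$; the degree $d_i$ of vertex $i$ is the number of edges containing it. Connectedness: any two vertices are joined by a path $v_0e_1v_1\cdots e_lv_l$ (distinct vertices, distinct edges, $v_{i-1},v_i\in e_i$). A $2$-$(n,b,k,r,\lambda)$ design is regarded as a $k$-uniform $r$-regular hypergraph on $n$ vertices with $b$ edges such that every pair of distinct vertices $x,y$ lies in exactly $\lambda$ common edges; $\mathcal{G}$ is a $2$-design if it is such a design for some parameters. For $\mathbf{x}\in\mathbb{R}^n$, $\mathcal{L}_\mathcal{G}\mathbf{x}^k=\sum_{\{i_1,\ldots,i_k\}\in E(\mathcal{G})}\left(x_{i_1}^k+\cdots+x_{i_k}^k-k\,x_{i_1}\cdots x_{i_k}\right)$; the inverse Perron value of vertex $j$ is $\alpha_j(\mathcal{G})=\min\{\mathcal{L}_\mathcal{G}\mathbf{x}^k : \mathbf{x}\in\mathbb{R}^n_+,\ \sum_{i=1}^n x_i^k=1,\ x_j=0\}$. *)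

theory Defs
  imports Complex_Main
begin

definition k_uniform_hypergraph :: "nat \<Rightarrow> nat \<Rightarrow> nat set set \<Rightarrow> bool" where
  "k_uniform_hypergraph n k E \<longleftrightarrow> (\<forall>e\<in>E. e \<subseteq> {1..n} \<and> card e = k)"

definition hdegree :: "nat set set \<Rightarrow> nat \<Rightarrow> nat" where
  "hdegree E i = card {e\<in>E. i \<in> e}"

definition max_degree :: "nat \<Rightarrow> nat set set \<Rightarrow> nat" where
  "max_degree n E = Max (hdegree E ` {1..n})"

definition is_hpath :: "nat set set \<Rightarrow> nat list \<Rightarrow> nat set list \<Rightarrow> bool" where
  "is_hpath E vs es \<longleftrightarrow> vs \<noteq> [] \<and> length es + 1 = length vs \<and> distinct vs \<and> distinct es
     \<and> (\<forall>i < length es. es ! i \<in> E \<and> vs ! i \<in> es ! i \<and> vs ! (Suc i) \<in> es ! i)"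

definition hconnected :: "nat \<Rightarrow> nat set set \<Rightarrow> bool" where
  "hconnected n E \<longleftrightarrow> (\<forall>u\<in>{1..n}. \<forall>v\<in>{1..n}.
     \<exists>vs es. is_hpath E vs es \<and> hd vs = u \<and> last vs = v)"

definition is_2_design_params :: "nat \<Rightarrow> nat \<Rightarrow> nat \<Rightarrow> nat \<Rightarrow> nat \<Rightarrow> nat set set \<Rightarrow> bool" where
  "is_2_design_params n b k r lam E \<longleftrightarrow> k_uniform_hypergraph n k E \<and> card E = b
     \<and> (\<forall>i\<in>{1..n}. hdegree E i = r)
     \<and> (\<forall>x\<in>{1..n}. \<forall>y\<in>{1..n}. x \<noteq> y \<longrightarrow> card {e\<in>E. x \<in> e \<and> y \<in> e} = lam)"

definition is_2_design :: "nat \<Rightarrow> nat \<Rightarrow> nat set set \<Rightarrow> bool" where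
  "is_2_design n k E \<longleftrightarrow> (\<exists>b r lam. is_2_design_params n b k r lam E)"

definition laplacian_form :: "nat \<Rightarrow> nat set set \<Rightarrow> (nat \<Rightarrow> real) \<Rightarrow> real" where
  "laplacian_form k E x = (\<Sum>e\<in>E. (\<Sum>i\<in>e. x i ^ k) - real k * (\<Prod>i\<in>e. x i))"

text \<open>Inverse Perron value of vertex j (the minimum is attained by compactness; we take Inf).\<close>
definition inverse_perron :: "nat \<Rightarrow> nat \<Rightarrow> nat set set \<Rightarrow> nat \<Rightarrow> real" where
  "inverse_perron n k E j = Inf {laplacian_form k E x | x.
      (\<forall>i\<in>{1..n}. x i \<ge> 0) \<and> (\<Sum>i=1..n. x i ^ k) = 1 \<and> x j = 0}"

end

(*
  For x >= 0 with x_j = 0, every edge through j contributes only its power sum to L x, and every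
  other edge contributes a nonnegative AM-GM defect; hence L x >= sum_v c(v,j) x_v^k, where c is the
  codegree. In a 2-design c(v,j) = lambda for v ~= j, so alpha_j >= lambda, and the vector that is 0
  at j and 1 elsewhere attains lambda (n-1) = r (k-1).
  Conversely, testing alpha_j against that vector gives d_j >= Delta, so the hypergraph is regular
  and the vector is a minimiser. Raising its i-th entry to 1+t keeps the Rayleigh quotient
  at least alpha_j; the derivative at t = 0 must vanish, which says c(i,j) = alpha_j for all i ~= j.
*)
theory Submission
  imports Defs "HOL-Analysis.Convex"
begin

definition codegree :: "nat set set \<Rightarrow> nat \<Rightarrow> nat \<Rightarrow> nat" where
  "codegree E u v = card {e\<in>E. u \<in> e \<and> v \<in> e}"

definition perron_feasible :: "nat \<Rightarrow> nat \<Rightarrow> nat \<Rightarrow> (nat \<Rightarrow> real) \<Rightarrow> bool" where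
  "perron_feasible n k j x \<longleftrightarrow> (\<forall>i\<in>{1..n}. 0 \<le> x i) \<and> (\<Sum>i=1..n. x i ^ k) = 1 \<and> x j = 0"

lemma inverse_perron_eq_Inf_feasible:
  "inverse_perron n k E j = Inf (laplacian_form k E ` Collect (perron_feasible n k j))"
  unfolding inverse_perron_def perron_feasible_def by (rule arg_cong[of _ _ Inf]) auto

lemma card_mult_prod_le_sum_power:
  fixes x :: "nat \<Rightarrow> real"
  assumes "finite e" "card e = k" "k > 0" "\<And>i. i \<in> e \<Longrightarrow> 0 \<le> x i"
  shows "real k * (\<Prod>i\<in>e. x i) \<le> (\<Sum>i\<in>e. x i ^ k)"
proof -
  have "(\<Prod>i\<in>e. x i) = ((\<Prod>i\<in>e. x i) ^ k) powr (1 / k)"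
  proof (cases "(\<Prod>i\<in>e. x i) = 0")
    case False
    then have "(\<Prod>i\<in>e. x i) > 0"
      using assms(4) by (simp add: prod_nonneg order_less_le)
    then show ?thesis using assms(3) by (simp add: powr_powr flip: powr_realpow)
  qed (use assms(3) in simp)
  also have "\<dots> = (\<Prod>i\<in>e. x i ^ k) powr (1 / card e)"
    by (simp add: assms(2) prod_power_distrib)
  also have "\<dots> \<le> (\<Sum>i\<in>e. x i ^ k / card e)"
    using assms by (intro arith_geom_mean) auto
  also have "\<dots> = (\<Sum>i\<in>e. x i ^ k) / k"
    by (simp add: assms(2) sum_divide_distrib)
  finally show ?thesis
    using assms(3) by (simp add: pos_le_divide_eq mult.commute)
qed

lemma sum_sum_members_eq_sum_card:
  fixes f :: "'a \<Rightarrow> real"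
  assumes "finite V" "finite F" "\<forall>e\<in>F. e \<subseteq> V"
  shows "(\<Sum>e\<in>F. \<Sum>v\<in>e. f v) = (\<Sum>v\<in>V. f v * card {e\<in>F. v \<in> e})"
proof -
  have "(\<Sum>e\<in>F. \<Sum>v\<in>e. f v) = (\<Sum>e\<in>F. \<Sum>v\<in>V. if v \<in> e then f v else 0)"
  proof (rule sum.cong[OF refl])
    fix e assume "e \<in> F"
    then have "e = {v\<in>V. v \<in> e}" using assms(3) by auto
    then show "(\<Sum>v\<in>e. f v) = (\<Sum>v\<in>V. if v \<in> e then f v else 0)"
      using assms(1) by (metis (no_types) sum.inter_filter)
  qed
  also have "\<dots> = (\<Sum>v\<in>V. \<Sum>e\<in>F. if v \<in> e then f v else 0)"
    by (rule sum.swap)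
  also have "\<dots> = (\<Sum>v\<in>V. f v * card {e\<in>F. v \<in> e})"
    using assms(2) by (simp add: sum.inter_filter[symmetric] mult.commute)
  finally show ?thesis .
qed

lemma laplacian_form_scale:
  assumes "\<forall>e\<in>E. card e = k"
  shows "laplacian_form k E (\<lambda>v. s * x v) = s ^ k * laplacian_form k E x"
  unfolding laplacian_form_def sum_distrib_left
  using assms by (intro sum.cong refl)
    (simp add: power_mult_distrib prod.distrib sum_distrib_left algebra_simps)

lemma power_perturbation_nonneg_imp_eq:
  fixes a c :: real
  assumes "\<And>t. t > -1 \<Longrightarrow> 0 \<le> a * ((1 + t) ^ k - 1) - c * t"
  shows "c = a * k"
proof -
  define g where "g t = a * ((1 + t) ^ k - 1) - c * t" for t :: real
  have "(g has_real_derivative a * (real k * (1 + 0) ^ (k - 1)) - c) (at 0)"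
    unfolding g_def by (auto intro!: derivative_eq_intros)
  moreover have "\<forall>t. \<bar>0 - t\<bar> < 1 \<longrightarrow> g 0 \<le> g t"
    using assms by (auto simp: g_def)
  ultimately have "a * (real k * (1 + 0) ^ (k - 1)) - c = 0"
    by (meson DERIV_local_min zero_less_one)
  then show ?thesis by simp
qed

lemma edge_term_fun_upd:
  fixes x :: "'a \<Rightarrow> real"
  assumes "finite e" "i \<in> e"
  shows "(\<Sum>v\<in>e. (x(i := s)) v ^ k) - real k * (\<Prod>v\<in>e. (x(i := s)) v)
    = ((\<Sum>v\<in>e. x v ^ k) - real k * (\<Prod>v\<in>e. x v))
      + (s ^ k - x i ^ k) - real k * (s - x i) * (\<Prod>v\<in>e - {i}. x v)"
proof -
  have "(\<Sum>v\<in>e - {i}. (x(i := s)) v ^ k) = (\<Sum>v\<in>e - {i}. x v ^ k)"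
    "(\<Prod>v\<in>e - {i}. (x(i := s)) v) = (\<Prod>v\<in>e - {i}. x v)"
    by (auto intro: sum.cong prod.cong)
  then show ?thesis
    using assms by (simp add: sum.remove prod.remove algebra_simps)
qed

lemma sum_punctured_ones_power:
  assumes "finite A" "0 < k"
  shows "(\<Sum>v\<in>A. (if v = j then 0 else 1 :: real) ^ k) = real (card (A - {j}))"
proof -
  have "(\<Sum>v\<in>A. (if v = j then 0 else 1 :: real) ^ k) = (\<Sum>v\<in>A - {j}. 1)"
    using assms by (intro sum.mono_neutral_cong_right) auto
  then show ?thesis by simp
qed

context
  fixes n k :: nat and E :: "nat set set"
  assumes uniform: "k_uniform_hypergraph n k E" and k_pos: "0 < k"
begin

lemma edge_subset_card:
  assumes "e \<in> E"
  shows "e \<subseteq> {1..n}" "card e = k" "finite e"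
  using uniform assms unfolding k_uniform_hypergraph_def by (auto intro: finite_subset)

lemma finite_edges: "finite E"
proof (rule finite_subset)
  show "E \<subseteq> Pow {1..n}" using edge_subset_card by auto
qed simp

lemma laplacian_form_vanishing_at:
  fixes x :: "nat \<Rightarrow> real"
  assumes "x j = 0"
  shows "laplacian_form k E x = (\<Sum>v=1..n. x v ^ k * codegree E v j)
    + (\<Sum>e\<in>{e\<in>E. j \<notin> e}. (\<Sum>v\<in>e. x v ^ k) - real k * (\<Prod>v\<in>e. x v))"
proof -
  let ?t = "\<lambda>e. (\<Sum>v\<in>e. x v ^ k) - real k * (\<Prod>v\<in>e. x v)"
  have "laplacian_form k E x = (\<Sum>e\<in>{e\<in>E. j \<in> e}. ?t e) + (\<Sum>e\<in>{e\<in>E. j \<notin> e}. ?t e)"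
    unfolding laplacian_form_def using finite_edges
    by (subst sum.union_disjoint[symmetric]) (auto intro: sum.cong)
  also have "(\<Sum>e\<in>{e\<in>E. j \<in> e}. ?t e) = (\<Sum>e\<in>{e\<in>E. j \<in> e}. \<Sum>v\<in>e. x v ^ k)"
    using assms edge_subset_card by (intro sum.cong refl) auto
  also have "\<dots> = (\<Sum>v=1..n. x v ^ k * card {e\<in>{e\<in>E. j \<in> e}. v \<in> e})"
    using finite_edges edge_subset_card by (intro sum_sum_members_eq_sum_card) auto
  also have "\<dots> = (\<Sum>v=1..n. x v ^ k * codegree E v j)"
    unfolding codegree_def by (intro sum.cong refl arg_cong[where f="\<lambda>S. x _ ^ k * real (card S)"]) auto
  finally show ?thesis .
qed

lemma codegree_sum_le_laplacian_form:
  fixes x :: "nat \<Rightarrow> real"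
  assumes "\<forall>v\<in>{1..n}. 0 \<le> x v" "x j = 0"
  shows "(\<Sum>v=1..n. x v ^ k * codegree E v j) \<le> laplacian_form k E x"
proof -
  have "0 \<le> (\<Sum>e\<in>{e\<in>E. j \<notin> e}. (\<Sum>v\<in>e. x v ^ k) - real k * (\<Prod>v\<in>e. x v))"
  proof (intro sum_nonneg)
    fix e assume "e \<in> {e\<in>E. j \<notin> e}"
    then have "real k * (\<Prod>v\<in>e. x v) \<le> (\<Sum>v\<in>e. x v ^ k)"
      using edge_subset_card[of e] k_pos assms(1) by (intro card_mult_prod_le_sum_power) auto
    then show "0 \<le> (\<Sum>v\<in>e. x v ^ k) - real k * (\<Prod>v\<in>e. x v)" by simp
  qed
  then show ?thesis using laplacian_form_vanishing_at[of x j] assms(2) by linarith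
qed

lemma laplacian_form_nonneg:
  fixes x :: "nat \<Rightarrow> real"
  assumes "\<forall>v\<in>{1..n}. 0 \<le> x v" "x j = 0"
  shows "0 \<le> laplacian_form k E x"
  using assms by (intro order_trans[OF _ codegree_sum_le_laplacian_form] sum_nonneg) auto

lemma laplacian_form_punctured_ones_eq_codegree_sum:
  "laplacian_form k E (\<lambda>v. if v = j then 0 else 1) = (\<Sum>v\<in>{1..n} - {j}. real (codegree E v j))"
proof -
  let ?y = "\<lambda>v. if v = j then 0 else 1 :: real"
  have "(\<Sum>e\<in>{e\<in>E. j \<notin> e}. (\<Sum>v\<in>e. ?y v ^ k) - real k * (\<Prod>v\<in>e. ?y v)) = 0"
  proof (rule sum.neutral, rule ballI)
    fix e assume "e \<in> {e\<in>E. j \<notin> e}"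
    then show "(\<Sum>v\<in>e. ?y v ^ k) - real k * (\<Prod>v\<in>e. ?y v) = 0"
      using edge_subset_card[of e] k_pos by (simp add: sum_punctured_ones_power)
  qed
  moreover have "(\<Sum>v=1..n. ?y v ^ k * codegree E v j) = (\<Sum>v\<in>{1..n} - {j}. real (codegree E v j))"
    using k_pos by (intro sum.mono_neutral_cong_right) auto
  ultimately show ?thesis
    using laplacian_form_vanishing_at[of ?y j] by simp
qed

lemma laplacian_form_punctured_ones:
  "laplacian_form k E (\<lambda>v. if v = j then 0 else 1) = real (hdegree E j) * (real k - 1)"
proof -
  let ?y = "\<lambda>v. if v = j then 0 else 1 :: real"
  have "laplacian_form k E ?y = (\<Sum>e\<in>E. if j \<in> e then real k - 1 else 0)"
    unfolding laplacian_form_def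
  proof (rule sum.cong[OF refl])
    fix e assume "e \<in> E"
    then have e: "finite e" "card e = k" using edge_subset_card by auto
    show "(\<Sum>v\<in>e. ?y v ^ k) - real k * (\<Prod>v\<in>e. ?y v) = (if j \<in> e then real k - 1 else 0)"
    proof (cases "j \<in> e")
      case True
      then show ?thesis using e k_pos by (simp add: sum_punctured_ones_power of_nat_diff)
    qed (use e k_pos in \<open>simp add: sum_punctured_ones_power\<close>)
  qed
  also have "\<dots> = real (hdegree E j) * (real k - 1)"
    using finite_edges by (simp add: sum.If_cases hdegree_def Int_def)
  finally show ?thesis .
qed

lemma perron_feasible_normalize:
  fixes y :: "nat \<Rightarrow> real"
  defines "S \<equiv> \<Sum>v=1..n. y v ^ k"
  assumes "\<forall>v\<in>{1..n}. 0 \<le> y v" "y j = 0" "0 < S"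
  shows "perron_feasible n k j (\<lambda>v. root k (1 / S) * y v)"
proof -
  have "root k (1 / S) ^ k = 1 / S"
    using assms k_pos by (simp add: real_root_pow_pos2)
  moreover have "(\<Sum>v=1..n. (root k (1 / S) * y v) ^ k) = root k (1 / S) ^ k * S"
    unfolding S_def by (simp add: power_mult_distrib sum_distrib_left)
  ultimately have "(\<Sum>v=1..n. (root k (1 / S) * y v) ^ k) = 1"
    using assms(4) by simp
  then show ?thesis
    using assms unfolding perron_feasible_def by (simp add: real_root_ge_zero)
qed

lemma inverse_perron_le:
  assumes "perron_feasible n k j x"
  shows "inverse_perron n k E j \<le> laplacian_form k E x"
  unfolding inverse_perron_eq_Inf_feasible
proof (rule cInf_lower)
  show "bdd_below (laplacian_form k E ` Collect (perron_feasible n k j))"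
    by (rule bdd_belowI2[of _ 0]) (auto simp: perron_feasible_def intro: laplacian_form_nonneg)
qed (use assms in simp)

lemma inverse_perron_mult_le:
  fixes y :: "nat \<Rightarrow> real"
  assumes "\<forall>v\<in>{1..n}. 0 \<le> y v" "y j = 0" "0 < (\<Sum>v=1..n. y v ^ k)"
  shows "inverse_perron n k E j * (\<Sum>v=1..n. y v ^ k) \<le> laplacian_form k E y"
proof -
  define S where "S = (\<Sum>v=1..n. y v ^ k)"
  have "inverse_perron n k E j \<le> laplacian_form k E (\<lambda>v. root k (1 / S) * y v)"
    using assms unfolding S_def by (intro inverse_perron_le perron_feasible_normalize)
  also have "\<dots> = laplacian_form k E y / S"
    using edge_subset_card assms k_pos
    by (simp add: laplacian_form_scale real_root_pow_pos2 S_def)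
  finally show ?thesis
    using assms(3) by (simp add: S_def pos_le_divide_eq)
qed

lemma le_inverse_perron:
  assumes "2 \<le> n" "j \<in> {1..n}" "\<And>x. perron_feasible n k j x \<Longrightarrow> a \<le> laplacian_form k E x"
  shows "a \<le> inverse_perron n k E j"
  unfolding inverse_perron_eq_Inf_feasible
proof (rule cInf_greatest)
  have "perron_feasible n k j (\<lambda>v. root k (1 / (\<Sum>v=1..n. (if v = j then 0 else 1 :: real) ^ k))
      * (if v = j then 0 else 1))"
    using assms(1,2) by (intro perron_feasible_normalize) (auto simp: k_pos sum_punctured_ones_power)
  then show "laplacian_form k E ` Collect (perron_feasible n k j) \<noteq> {}" by blast
qed (use assms(3) in auto)

lemma hdegree_eq_card_plus_codegree:
  "hdegree E i = card {e\<in>E. i \<in> e \<and> j \<notin> e} + codegree E i j"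
proof -
  have "{e\<in>E. i \<in> e} = {e\<in>E. i \<in> e \<and> j \<notin> e} \<union> {e\<in>E. i \<in> e \<and> j \<in> e}" by auto
  then show ?thesis
    unfolding hdegree_def codegree_def using finite_edges
    by (simp add: card_Un_disjoint disjoint_iff)
qed

lemma laplacian_form_perturb_punctured_ones:
  assumes "i \<noteq> j"
  shows "laplacian_form k E ((\<lambda>v. if v = j then 0 else 1)(i := s))
    = laplacian_form k E (\<lambda>v. if v = j then 0 else 1)
      + real (hdegree E i) * (s ^ k - 1) - real k * (s - 1) * card {e\<in>E. i \<in> e \<and> j \<notin> e}"
proof -
  let ?y = "\<lambda>v. if v = j then 0 else 1 :: real"
  let ?t = "\<lambda>x e. (\<Sum>v\<in>e. x v ^ k) - real k * (\<Prod>v\<in>e. x v)"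
  have "?t (?y(i := s)) e = ?t ?y e + (if i \<in> e then s ^ k - 1 else 0)
      - real k * (s - 1) * (if i \<in> e \<and> j \<notin> e then 1 else 0)" if "e \<in> E" for e
  proof (cases "i \<in> e")
    case True
    have "(\<Prod>v\<in>e - {i}. ?y v) = (if j \<in> e then 0 else 1)"
      using edge_subset_card(3)[OF that] assms by simp
    moreover have "?t (?y(i := s)) e = ?t ?y e + (s ^ k - ?y i ^ k)
        - real k * (s - ?y i) * (\<Prod>v\<in>e - {i}. ?y v)"
      by (rule edge_term_fun_upd[OF edge_subset_card(3)[OF that] True])
    ultimately show ?thesis
      using True assms by simp
  next
    case False
    then have "?t (?y(i := s)) e = ?t ?y e"
      by (intro arg_cong2[where f="\<lambda>a b. a - real k * b"] sum.cong prod.cong) auto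
    then show ?thesis using False by simp
  qed
  then have "laplacian_form k E (?y(i := s)) = (\<Sum>e\<in>E. ?t ?y e + (if i \<in> e then s ^ k - 1 else 0)
      - real k * (s - 1) * (if i \<in> e \<and> j \<notin> e then 1 else 0))"
    unfolding laplacian_form_def by (intro sum.cong) auto
  also have "\<dots> = laplacian_form k E ?y
      + real (hdegree E i) * (s ^ k - 1) - real k * (s - 1) * card {e\<in>E. i \<in> e \<and> j \<notin> e}"
    using finite_edges
    by (simp add: laplacian_form_def hdegree_def sum.distrib sum_subtractf
        flip: sum_distrib_left sum.inter_filter)
  finally show ?thesis .
qed

lemma codegree_eq_if_punctured_ones_minimizes:
  fixes A :: real
  assumes "i \<in> {1..n}" "i \<noteq> j"
    and lower: "\<And>y. \<forall>v\<in>{1..n}. 0 \<le> y v \<Longrightarrow> y j = 0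
      \<Longrightarrow> A * (\<Sum>v=1..n. y v ^ k) \<le> laplacian_form k E y"
    and attained: "laplacian_form k E (\<lambda>v. if v = j then 0 else 1)
      = A * (\<Sum>v=1..n. (if v = j then 0 else 1) ^ k)"
  shows "real (codegree E i j) = A"
proof -
  let ?y = "\<lambda>v. if v = j then 0 else 1 :: real"
  define b where "b = card {e\<in>E. i \<in> e \<and> j \<notin> e}"
  have "0 \<le> (real (hdegree E i) - A) * ((1 + t) ^ k - 1) - real k * b * t" if "t > -1" for t
  proof -
    have "(\<Sum>v=1..n. (?y(i := 1 + t)) v ^ k) = (\<Sum>v=1..n. ?y v ^ k) + ((1 + t) ^ k - 1)"
    proof -
      have "(\<Sum>v\<in>{1..n} - {i}. (?y(i := 1 + t)) v ^ k) = (\<Sum>v\<in>{1..n} - {i}. ?y v ^ k)"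
        by (intro sum.cong) auto
      then show ?thesis
        using assms(1,2) by (simp add: sum.remove[of _ i])
    qed
    moreover have "A * (\<Sum>v=1..n. (?y(i := 1 + t)) v ^ k) \<le> laplacian_form k E (?y(i := 1 + t))"
      using that assms(2) by (intro lower) auto
    ultimately have "A * ((\<Sum>v=1..n. ?y v ^ k) + ((1 + t) ^ k - 1))
        \<le> A * (\<Sum>v=1..n. ?y v ^ k) + real (hdegree E i) * ((1 + t) ^ k - 1) - real k * t * b"
      using laplacian_form_perturb_punctured_ones[OF assms(2), of "1 + t"] attained
      by (simp add: b_def)
    then show ?thesis
      by (simp add: algebra_simps)
  qed
  then have "real k * b = (real (hdegree E i) - A) * real k"
    by (rule power_perturbation_nonneg_imp_eq)
  then show ?thesis
    using k_pos hdegree_eq_card_plus_codegree[of i j] by (simp add: b_def)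
qed

lemma inverse_perron_design:
  assumes design: "is_2_design_params n b k r lam E" and "2 \<le> n" "j \<in> {1..n}"
  shows "inverse_perron n k E j = real r * (real k - 1) / (real n - 1)"
proof -
  let ?y = "\<lambda>v. if v = j then 0 else 1 :: real"
  have codeg: "codegree E v j = lam" if "v \<in> {1..n}" "v \<noteq> j" for v
    using design that assms(3) unfolding is_2_design_params_def codegree_def by auto
  have L_y: "laplacian_form k E ?y = lam * (real n - 1)"
    using assms(3) codeg by (simp add: laplacian_form_punctured_ones_eq_codegree_sum of_nat_diff)
  have r_lam: "real r * (real k - 1) = lam * (real n - 1)"
    using design assms(3) L_y by (simp add: laplacian_form_punctured_ones is_2_design_params_def)
  have sum_y: "(\<Sum>v=1..n. ?y v ^ k) = real n - 1"
    using assms(3) by (simp add: k_pos sum_punctured_ones_power of_nat_diff)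
  have "inverse_perron n k E j * (real n - 1) \<le> lam * (real n - 1)"
    using inverse_perron_mult_le[of ?y j] assms(2) sum_y L_y by simp
  then have "inverse_perron n k E j \<le> lam"
    using assms(2) by simp
  moreover have "lam \<le> inverse_perron n k E j"
  proof (rule le_inverse_perron[OF assms(2,3)])
    fix x assume x: "perron_feasible n k j x"
    have "(\<Sum>v=1..n. x v ^ k * codegree E v j) = (\<Sum>v=1..n. lam * x v ^ k)"
      using x codeg k_pos by (intro sum.cong refl) (auto simp: perron_feasible_def)
    also have "\<dots> = lam"
      using x by (simp add: perron_feasible_def flip: sum_distrib_left)
    finally show "lam \<le> laplacian_form k E x"
      using codegree_sum_le_laplacian_form[of x j] x by (simp add: perron_feasible_def)
  qed
  ultimately show ?thesis
    using assms(2) r_lam by (simp add: eq_divide_eq)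
qed

lemma is_2_design_if_inverse_perron_eq:
  assumes "2 \<le> k" "2 \<le> n"
    and const: "\<forall>j\<in>{1..n}. inverse_perron n k E j = real (max_degree n E) * (real k - 1) / (real n - 1)"
  shows "is_2_design n k E"
proof -
  let ?y = "\<lambda>j v. if v = j then 0 else 1 :: real"
  define A where "A = real (max_degree n E) * (real k - 1) / (real n - 1)"
  have sum_y: "(\<Sum>v=1..n. ?y j v ^ k) = real n - 1" if "j \<in> {1..n}" for j
    using that by (simp add: k_pos sum_punctured_ones_power of_nat_diff)
  have lower: "A * (\<Sum>v=1..n. y v ^ k) \<le> laplacian_form k E y"
    if "j \<in> {1..n}" "\<forall>v\<in>{1..n}. 0 \<le> y v" "y j = 0" for j y
  proof (cases "(\<Sum>v=1..n. y v ^ k) = 0")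
    case False
    then have "0 < (\<Sum>v=1..n. y v ^ k)"
      using that(2) by (metis (no_types, lifting) order_less_le sum_nonneg zero_le_power)
    then show ?thesis
      using inverse_perron_mult_le[OF that(2,3)] const that(1) by (simp add: A_def)
  qed (use laplacian_form_nonneg[OF that(2,3)] in simp)
  have degree: "hdegree E j = max_degree n E" if "j \<in> {1..n}" for j
  proof (rule antisym)
    show "hdegree E j \<le> max_degree n E"
      unfolding max_degree_def using that by (intro Max_ge) auto
    have "A * (real n - 1) \<le> real (hdegree E j) * (real k - 1)"
      using lower[OF that, of "?y j"] sum_y[OF that] by (simp add: laplacian_form_punctured_ones)
    then have "real (max_degree n E) * (real k - 1) \<le> real (hdegree E j) * (real k - 1)"
      using assms(2) by (simp add: A_def)
    then show "max_degree n E \<le> hdegree E j"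
      using assms(1) by simp
  qed
  have codegree: "real (codegree E i j) = A" if "i \<in> {1..n}" "j \<in> {1..n}" "i \<noteq> j" for i j
  proof (rule codegree_eq_if_punctured_ones_minimizes[OF that(1,3)])
    show "A * (\<Sum>v=1..n. y v ^ k) \<le> laplacian_form k E y"
      if "\<forall>v\<in>{1..n}. 0 \<le> y v" "y j = 0" for y
      using lower \<open>j \<in> {1..n}\<close> that by blast
    show "laplacian_form k E (?y j) = A * (\<Sum>v=1..n. ?y j v ^ k)"
      using degree[OF that(2)] sum_y[OF that(2)] assms(2)
      by (simp add: laplacian_form_punctured_ones A_def)
  qed
  have "is_2_design_params n (card E) k (max_degree n E) (codegree E 1 2) E"
    unfolding is_2_design_params_def
  proof (intro conjI ballI impI)
    fix x y assume "x \<in> {1..n}" "y \<in> {1..n}" "x \<noteq> y"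
    then have "real (codegree E x y) = real (codegree E 1 2)"
      using codegree[of x y] codegree[of 1 2] assms(2) by simp
    then show "card {e\<in>E. x \<in> e \<and> y \<in> e} = codegree E 1 2"
      unfolding codegree_def by linarith
  qed (use uniform degree in auto)
  then show ?thesis
    unfolding is_2_design_def by blast
qed

end

lemma max_degree_regular:
  assumes "0 < n" "\<forall>i\<in>{1..n}. hdegree E i = r"
  shows "max_degree n E = r"
proof -
  have "hdegree E ` {1..n} = {r}" using assms by force
  then show ?thesis unfolding max_degree_def by simp
qed

lemma two_le_uniformity_if_hconnected:
  assumes "k_uniform_hypergraph n k E" "hconnected n E" "2 \<le> n"
  shows "2 \<le> k"
proof -
  obtain vs es where path: "is_hpath E vs es" "hd vs = 1" "last vs = 2"
    using assms(2,3) unfolding hconnected_def by fastforce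
  then have "length vs \<noteq> 1"
    by (auto simp: length_Suc_conv)
  then have "0 < length es" "1 < length vs"
    using path(1) unfolding is_hpath_def by auto
  then have "es ! 0 \<in> E" "{vs ! 0, vs ! 1} \<subseteq> es ! 0" "vs ! 0 \<noteq> vs ! 1"
    using path(1) nth_eq_iff_index_eq[of vs 0 1] unfolding is_hpath_def by auto
  moreover from this have "finite (es ! 0)" "card (es ! 0) = k"
    using assms(1) unfolding k_uniform_hypergraph_def by (auto intro: finite_subset)
  ultimately show ?thesis
    using card_mono[of "es ! 0" "{vs ! 0, vs ! 1}"] by simp
qed

theorem theorem3p8:
  fixes n k :: nat and E :: "nat set set"
  assumes "k_uniform_hypergraph n k E"
    and "hconnected n E"
    and "n \<ge> 2"
  shows "is_2_design n k E \<longleftrightarrow>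
    (\<forall>j\<in>{1..n}. inverse_perron n k E j = real (max_degree n E) * (real k - 1) / (real n - 1))"
proof
  have k: "2 \<le> k"
    using two_le_uniformity_if_hconnected[OF assms] .
  show "is_2_design n k E \<Longrightarrow> \<forall>j\<in>{1..n}. inverse_perron n k E j
      = real (max_degree n E) * (real k - 1) / (real n - 1)"
  proof
    fix j assume "is_2_design n k E" "j \<in> {1..n}"
    then obtain b r lam where design: "is_2_design_params n b k r lam E"
      unfolding is_2_design_def by blast
    then have "max_degree n E = r"
      using assms(3) by (intro max_degree_regular) (auto simp: is_2_design_params_def)
    then show "inverse_perron n k E j = real (max_degree n E) * (real k - 1) / (real n - 1)"
      using inverse_perron_design[OF assms(1) _ design assms(3) \<open>j \<in> _\<close>] k by simp
  qed
  show "\<forall>j\<in>{1..n}. inverse_perron n k E j = real (max_degree n E) * (real k - 1) / (real n - 1)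
      \<Longrightarrow> is_2_design n k E"
    using is_2_design_if_inverse_perron_eq[OF assms(1) _ k assms(3)] k by simp
qed

end
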